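(* For $\tau>0$ let $\theta\sim HS(\tau)$ and $X\mid\theta\sim\mathcal N(\theta,1/n)$. There is a constant $C>0$ such that for all $n\ge1$, $t\in\mathbb R$, $\theta_0\in\mathbb R$ and $\tau>0$, $$E_{\theta_0}E\big[e^{t\sqrt n(\theta-X)}\,\big|\,X\big]\le C\,\frac{\tau\sqrt n}{\log\big(1+\frac{4\tau^2}{(|\theta_0|+1)^2}\big)}\,e^{t^2/2},$$ where the inner expectation is with respect to the posterior of $\theta$ given $X$ under the prior $HS(\tau)$.
   Context: $HS(\tau)$ (horseshoe distribution) is the law of $\theta$ where $\lambda\sim C^+(0,1)$ (standard half-Cauchy) and $\theta\mid\lambda\sim\mathcal N(0,\tau^2\lambda^2)$; its density $h_\tau$ satisfies $\frac{1}{(2\pi)^{3/2}\tau}\log(1+\frac{4\tau^2}{t^2})\le h_\tau(t)\le\frac{1}{(2\pi)^{3/2}\tau}\log(1+\frac{2\tau^2}{t^2})$ for $t\ne0$. $E_{\theta_0}$ denotes expectation over $X\sim\mathcal N(\theta_0,1/n)$. *)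

theory Defs
  imports "HOL-Probability.Probability"
begin

definition half_cauchy_density :: "real \<Rightarrow> real" where
  "half_cauchy_density l = (if 0 < l then 2 / (pi * (1 + l\<^sup>2)) else 0)"

definition hs_density :: "real \<Rightarrow> real \<Rightarrow> ennreal" where
  "hs_density \<tau> th =
     (\<integral>\<^sup>+ l. ennreal (half_cauchy_density l * normal_density 0 (\<tau> * l) th) \<partial>lborel)"

definition lik :: "nat \<Rightarrow> real \<Rightarrow> real \<Rightarrow> real" where
  "lik n th x = normal_density th (1 / sqrt (real n)) x"

text \<open>Posterior expectation E[f(theta) | X = x] under prior HS(tau),
  f nonnegative: ratio of integrals against prior density times likelihood.\<close>
definition post_expect :: "nat \<Rightarrow> real \<Rightarrow> (real \<Rightarrow> real) \<Rightarrow> real \<Rightarrow> ennreal" where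
  "post_expect n \<tau> f x =
     (\<integral>\<^sup>+ th. ennreal (f th) * hs_density \<tau> th * ennreal (lik n th x) \<partial>lborel) /
     (\<integral>\<^sup>+ th. hs_density \<tau> th * ennreal (lik n th x) \<partial>lborel)"

end

theory Submission
  imports Defs "HOL-Real_Asymp.Real_Asymp"
begin

text \<open>
  Let m(x) be the marginal density of X. The posterior expectation equals N(x) / m(x), where
  N(x) is the integral of e^{t sqrt n (\<theta> - x)} h(\<theta>) \<phi>(\<theta>, x) over \<theta>, with \<phi> the likelihood.
  On |\<theta>| \<le> r the horseshoe density is at least c \<tau>^{-1} log(1 + \<tau>^2/r^2); integrating it against
  the likelihood over the window |\<theta> - x| \<le> 1/sqrt n gives m(x) \<ge> c' \<tau>^{-1} log(1 + \<tau>^2/(|x|+1)^2).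
  Since |x| + 1 \<le> (|\<theta>0| + 1)(1 + |x - \<theta>0|) and the Gaussian factor of \<phi>(\<theta>0, x) absorbs
  (1 + |x - \<theta>0|)^2, this yields \<phi>(\<theta>0, x) \<le> K m(x) with K = C \<tau> sqrt n / log(1 + 4\<tau>^2/(|\<theta>0|+1)^2).
  The integrand is therefore at most K N(x), and by Tonelli and the Gaussian moment generating
  function the integral of N is e^{t^2/2} times the total mass of the horseshoe prior, which is at most 1.
\<close>

lemma nn_integral_normal_density:
  "0 < \<sigma> \<Longrightarrow> (\<integral>\<^sup>+x. ennreal (normal_density \<mu> \<sigma> x) \<partial>lborel) = 1"
  by (simp add: nn_integral_eq_integral)

lemma normal_density_ge:
  assumes "0 < \<sigma>" "\<bar>x - \<mu>\<bar> \<le> \<sigma>"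
  shows "exp (-1/2) / (sqrt (2 * pi) * \<sigma>) \<le> normal_density \<mu> \<sigma> x"
proof -
  have "(x - \<mu>)\<^sup>2 \<le> \<sigma>\<^sup>2"
    using assms by (metis abs_ge_zero power2_abs power_mono)
  then have "-1/2 \<le> - (x - \<mu>)\<^sup>2 / (2 * \<sigma>\<^sup>2)"
    using assms by (simp add: field_simps)
  then show ?thesis
    using assms by (simp add: normal_density_def real_sqrt_mult divide_right_mono)
qed

lemma ln_one_plus_mult_le:
  fixes l s :: real
  assumes "1 \<le> l" "0 \<le> s"
  shows "ln (1 + l * s) \<le> l * ln (1 + s)"
proof -
  have "(1 - 1/l) * ln 1 + 1/l * ln (1 + l * s) \<le> ln ((1 - 1/l) *\<^sub>R 1 + (1/l) *\<^sub>R (1 + l * s))"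
    using assms by (intro concave_onD[OF ln_concave]) (auto intro: add_pos_nonneg)
  also have "(1 - 1/l) *\<^sub>R 1 + (1/l) *\<^sub>R (1 + l * s) = 1 + s"
    using assms by (simp add: field_simps)
  finally show ?thesis
    using assms by (simp add: field_simps)
qed

lemma one_plus_sq_times_exp_neg_sq_le:
  fixes D :: real
  shows "(1 + D)\<^sup>2 * exp (- D\<^sup>2 / 2) \<le> 4"
proof -
  have "(1 + D)\<^sup>2 \<le> 4 * (1 + D\<^sup>2 / 2)"
    using zero_le_square[of "D - 1"] by (simp add: power2_eq_square algebra_simps)
  also have "\<dots> \<le> 4 * exp (D\<^sup>2 / 2)"
    by (intro mult_left_mono exp_ge_add_one_self) simp
  finally show ?thesis
    by (simp add: exp_minus field_simps)
qed

lemma ln_one_plus_div_sq_shift_le: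
  fixes u \<theta>\<^sub>0 x :: real
  assumes "0 \<le> u"
  shows "ln (1 + 4 * u / (\<bar>\<theta>\<^sub>0\<bar> + 1)\<^sup>2) * exp (- (x - \<theta>\<^sub>0)\<^sup>2 / 2)
    \<le> 16 * ln (1 + u / (\<bar>x\<bar> + 1)\<^sup>2)"
proof -
  define D where "D = \<bar>x - \<theta>\<^sub>0\<bar>"
  have pos: "0 < (\<bar>\<theta>\<^sub>0\<bar> + 1)\<^sup>2" "0 < (\<bar>x\<bar> + 1)\<^sup>2"
    by (simp_all add: add_pos_nonneg)
  have "1 \<le> (1 + D)\<^sup>2"
    by (simp add: D_def one_le_power)
  have shift: "(\<bar>x\<bar> + 1)\<^sup>2 \<le> (1 + D)\<^sup>2 * (\<bar>\<theta>\<^sub>0\<bar> + 1)\<^sup>2"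
  proof -
    have "\<bar>x\<bar> \<le> \<bar>\<theta>\<^sub>0\<bar> + D" "0 \<le> D * \<bar>\<theta>\<^sub>0\<bar>"
      using abs_triangle_ineq2[of x \<theta>\<^sub>0] by (simp_all add: D_def)
    then have "\<bar>x\<bar> + 1 \<le> (1 + D) * (\<bar>\<theta>\<^sub>0\<bar> + 1)"
      by (simp add: algebra_simps)
    then show ?thesis
      by (metis power_mono power_mult_distrib abs_ge_zero add_nonneg_nonneg zero_le_one)
  qed
  have "4 * u / (\<bar>\<theta>\<^sub>0\<bar> + 1)\<^sup>2 \<le> 4 * (1 + D)\<^sup>2 * (u / (\<bar>x\<bar> + 1)\<^sup>2)"
    using mult_left_mono[OF shift assms] pos by (simp add: field_simps)
  then have "ln (1 + 4 * u / (\<bar>\<theta>\<^sub>0\<bar> + 1)\<^sup>2) \<le> ln (1 + 4 * (1 + D)\<^sup>2 * (u / (\<bar>x\<bar> + 1)\<^sup>2))"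
    using assms pos by (subst ln_le_cancel_iff) (auto intro: add_pos_nonneg)
  also have "\<dots> \<le> 4 * (1 + D)\<^sup>2 * ln (1 + u / (\<bar>x\<bar> + 1)\<^sup>2)"
    using assms pos \<open>1 \<le> (1 + D)\<^sup>2\<close> by (intro ln_one_plus_mult_le) auto
  finally have "ln (1 + 4 * u / (\<bar>\<theta>\<^sub>0\<bar> + 1)\<^sup>2) * exp (- (x - \<theta>\<^sub>0)\<^sup>2 / 2)
      \<le> 4 * ln (1 + u / (\<bar>x\<bar> + 1)\<^sup>2) * ((1 + D)\<^sup>2 * exp (- D\<^sup>2 / 2))"
    by (simp add: D_def mult_right_mono mult_ac)
  also have "\<dots> \<le> 4 * ln (1 + u / (\<bar>x\<bar> + 1)\<^sup>2) * 4"
    using assms pos by (intro mult_left_mono one_plus_sq_times_exp_neg_sq_le) simp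
  finally show ?thesis
    by simp
qed

lemma nn_integral_inverse_mult_one_plus_sq:
  assumes "0 < b"
  shows "(\<integral>\<^sup>+l. ennreal (1 / (l * (1 + l\<^sup>2))) * indicator {b..} l \<partial>lborel)
    = ennreal (ln (1 + 1 / b\<^sup>2) / 2)"
proof -
  have "(\<integral>\<^sup>+l. ennreal (1 / (l * (1 + l\<^sup>2))) * indicator {b..} l \<partial>lborel)
    = ennreal (0 - (- ln (1 + 1 / b\<^sup>2) / 2))"
  proof (rule nn_integral_FTC_atLeast)
    fix l :: real
    assume "b \<le> l"
    then have l: "0 < l" using assms by simp
    then show "0 \<le> 1 / (l * (1 + l\<^sup>2))"
      by (simp add: add_pos_nonneg)
    have "0 < 1 + 1 / l\<^sup>2" "0 < l + l ^ 3" "0 < 4 * l ^ 3 * (1 + l\<^sup>2)"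
      using l by (simp_all add: add_pos_nonneg add_pos_pos)
    then show "((\<lambda>l. - ln (1 + 1 / l\<^sup>2) / 2) has_real_derivative 1 / (l * (1 + l\<^sup>2))) (at l)"
      using l by (auto intro!: derivative_eq_intros simp: field_simps power2_eq_square power3_eq_cube)
  qed (measurable, real_asymp)
  then show ?thesis by simp
qed

lemma borel_measurable_half_cauchy_density[measurable]:
  "half_cauchy_density \<in> borel_measurable borel"
  unfolding half_cauchy_density_def[abs_def] by measurable

lemma nn_integral_half_cauchy_density_le_1:
  "(\<integral>\<^sup>+l. ennreal (half_cauchy_density l) \<partial>lborel) \<le> 1"
proof -
  have "(\<integral>\<^sup>+l. ennreal (half_cauchy_density l) \<partial>lborel)
      \<le> (\<integral>\<^sup>+l. ennreal (2 / (pi * (1 + l\<^sup>2))) * indicator {0..} l \<partial>lborel)"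
    by (intro nn_integral_mono) (auto simp: half_cauchy_density_def indicator_def)
  also have "\<dots> = ennreal (1 - 2 / pi * arctan 0)"
  proof (rule nn_integral_FTC_atLeast)
    fix l :: real
    have "0 < 1 + l\<^sup>2"
      by (simp add: add_pos_nonneg)
    then show "0 \<le> 2 / (pi * (1 + l\<^sup>2))"
      and "((\<lambda>l. 2 / pi * arctan l) has_real_derivative 2 / (pi * (1 + l\<^sup>2))) (at l)"
      by (auto intro!: derivative_eq_intros simp: divide_simps)
  next
    show "((\<lambda>l. 2 / pi * arctan l) \<longlongrightarrow> 1) at_top"
      using tendsto_mult[OF tendsto_const tendsto_arctan_at_top, of "2 / pi"] by simp
  qed measurable
  finally show ?thesis
    by simp
qed

lemma measurable_hs_density[measurable (raw)]:
  assumes [measurable]: "f \<in> borel_measurable M"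
  shows "(\<lambda>x. hs_density \<tau> (f x)) \<in> borel_measurable M"
  unfolding hs_density_def normal_density_def by measurable

lemma measurable_lik[measurable (raw)]:
  assumes [measurable]: "f \<in> borel_measurable M" "g \<in> borel_measurable M"
  shows "(\<lambda>x. lik n (f x) (g x)) \<in> borel_measurable M"
  unfolding lik_def normal_density_def by measurable

lemma nn_integral_hs_density_le_1:
  assumes "0 < \<tau>"
  shows "(\<integral>\<^sup>+th. hs_density \<tau> th \<partial>lborel) \<le> 1"
proof -
  have "(\<integral>\<^sup>+th. hs_density \<tau> th \<partial>lborel) =
    (\<integral>\<^sup>+l. \<integral>\<^sup>+th. ennreal (half_cauchy_density l * normal_density 0 (\<tau> * l) th) \<partial>lborel \<partial>lborel)"
    unfolding hs_density_def by (rule lborel_pair.Fubini') (unfold normal_density_def, measurable)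
  also have "\<dots> = (\<integral>\<^sup>+l. ennreal (half_cauchy_density l) \<partial>lborel)"
  proof (rule nn_integral_cong)
    fix l :: real
    show "(\<integral>\<^sup>+th. ennreal (half_cauchy_density l * normal_density 0 (\<tau> * l) th) \<partial>lborel)
        = ennreal (half_cauchy_density l)"
    proof (cases "0 < l")
      case True
      have "0 \<le> half_cauchy_density l"
        by (simp add: half_cauchy_density_def)
      then show ?thesis
        using True assms by (simp add: ennreal_mult nn_integral_cmult nn_integral_normal_density)
    qed (simp add: half_cauchy_density_def)
  qed
  also have "\<dots> \<le> 1"
    by (rule nn_integral_half_cauchy_density_le_1)
  finally show ?thesis .
qed

lemma hs_density_ge:
  assumes "0 < \<tau>" "0 < r" "\<bar>th\<bar> \<le> r"
  shows "ennreal (exp (-1/2) / (pi * sqrt (2 * pi) * \<tau>) * ln (1 + \<tau>\<^sup>2 / r\<^sup>2)) \<le> hs_density \<tau> th"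
proof -
  define c where "c = exp (-1/2) / (pi * sqrt (2 * pi) * \<tau>)"
  define b where "b = r / \<tau>"
  have c: "0 < c" and b: "0 < b"
    using assms by (simp_all add: c_def b_def)
  have "ennreal (c * ln (1 + \<tau>\<^sup>2 / r\<^sup>2))
      = ennreal (2 * c) * (\<integral>\<^sup>+l. ennreal (1 / (l * (1 + l\<^sup>2))) * indicator {b..} l \<partial>lborel)"
    using assms c b by (simp add: nn_integral_inverse_mult_one_plus_sq ennreal_mult[symmetric]
        b_def power_divide)
  also have "\<dots> = (\<integral>\<^sup>+l. ennreal (2 * c / (l * (1 + l\<^sup>2))) * indicator {b..} l \<partial>lborel)"
    using c by (subst nn_integral_cmult[symmetric])
      (auto intro!: nn_integral_cong simp: ennreal_mult'[symmetric] split: split_indicator)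
  also have "\<dots> \<le> hs_density \<tau> th"
    unfolding hs_density_def
  proof (intro nn_integral_mono)
    fix l :: real
    show "ennreal (2 * c / (l * (1 + l\<^sup>2))) * indicator {b..} l
        \<le> ennreal (half_cauchy_density l * normal_density 0 (\<tau> * l) th)"
    proof (cases "b \<le> l")
      case True
      then have "r \<le> \<tau> * l"
        using assms by (simp add: b_def field_simps)
      then have "0 < \<tau> * l"
        using assms by linarith
      then have l: "0 < l" "\<bar>th - 0\<bar> \<le> \<tau> * l"
        using assms zero_less_mult_pos \<open>r \<le> \<tau> * l\<close> by (blast, simp)
      have "2 * c / (l * (1 + l\<^sup>2)) = half_cauchy_density l * (exp (-1/2) / (sqrt (2 * pi) * (\<tau> * l)))"
        using l by (simp add: c_def half_cauchy_density_def field_simps)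
      also have "\<dots> \<le> half_cauchy_density l * normal_density 0 (\<tau> * l) th"
        using l assms by (intro mult_left_mono normal_density_ge) (auto simp: half_cauchy_density_def)
      finally show ?thesis
        using True by (simp add: ennreal_leI)
    qed simp
  qed
  finally show ?thesis
    by (simp add: c_def)
qed

lemma lik_eq:
  assumes "0 < n"
  shows "lik n th x = sqrt (real n) / sqrt (2 * pi) * exp (- real n * (x - th)\<^sup>2 / 2)"
  using assms by (simp add: lik_def normal_density_def real_sqrt_mult real_sqrt_divide power_divide)

lemma nn_integral_exp_mult_lik:
  assumes "0 < n"
  shows "(\<integral>\<^sup>+x. ennreal (exp (t * sqrt (real n) * (th - x))) * ennreal (lik n th x) \<partial>lborel)
    = ennreal (exp (t\<^sup>2 / 2))"
proof -
  have "ennreal (exp (t * sqrt (real n) * (th - x))) * ennreal (lik n th x)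
      = ennreal (exp (t\<^sup>2 / 2)) * ennreal (normal_density (th - t / sqrt (real n)) (1 / sqrt (real n)) x)"
    for x
  proof -
    have "t * sqrt (real n) * (th - x) + - (real n * (x - th)\<^sup>2 / 2)
        = t\<^sup>2 / 2 + - (real n * (x - (th - t / sqrt (real n)))\<^sup>2 / 2)"
      using assms by (simp add: field_simps power2_eq_square)
    then show ?thesis
      using assms by (simp add: lik_eq lik_eq[unfolded lik_def] mult_exp_exp ennreal_mult[symmetric])
  qed
  then have "(\<integral>\<^sup>+x. ennreal (exp (t * sqrt (real n) * (th - x))) * ennreal (lik n th x) \<partial>lborel)
      = (\<integral>\<^sup>+x. ennreal (exp (t\<^sup>2 / 2))
          * ennreal (normal_density (th - t / sqrt (real n)) (1 / sqrt (real n)) x) \<partial>lborel)"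
    by simp
  also have "\<dots> = ennreal (exp (t\<^sup>2 / 2))"
    using assms by (simp add: nn_integral_cmult nn_integral_normal_density)
  finally show ?thesis .
qed

lemma nn_integral_joint_exp_shift_le:
  assumes "0 < n" "0 < \<tau>"
  shows "(\<integral>\<^sup>+x. \<integral>\<^sup>+th. ennreal (exp (t * sqrt (real n) * (th - x))) * hs_density \<tau> th * ennreal (lik n th x) \<partial>lborel \<partial>lborel)
    \<le> ennreal (exp (t\<^sup>2 / 2))"
proof -
  have "(\<integral>\<^sup>+x. \<integral>\<^sup>+th. ennreal (exp (t * sqrt (real n) * (th - x))) * hs_density \<tau> th * ennreal (lik n th x) \<partial>lborel \<partial>lborel)
      = (\<integral>\<^sup>+th. hs_density \<tau> th
          * \<integral>\<^sup>+x. ennreal (exp (t * sqrt (real n) * (th - x))) * ennreal (lik n th x) \<partial>lborel \<partial>lborel)"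
    by (subst lborel_pair.Fubini') (simp_all add: nn_integral_cmult[symmetric] mult_ac)
  also have "\<dots> = (\<integral>\<^sup>+th. hs_density \<tau> th \<partial>lborel) * ennreal (exp (t\<^sup>2 / 2))"
    using assms by (simp add: nn_integral_exp_mult_lik nn_integral_multc)
  also have "\<dots> \<le> ennreal (exp (t\<^sup>2 / 2))"
    using mult_right_mono[OF nn_integral_hs_density_le_1[OF assms(2)]] by simp
  finally show ?thesis .
qed

definition hs_marginal :: "nat \<Rightarrow> real \<Rightarrow> real \<Rightarrow> ennreal" where
  "hs_marginal n \<tau> x = (\<integral>\<^sup>+th. hs_density \<tau> th * ennreal (lik n th x) \<partial>lborel)"

lemma hs_marginal_ge:
  assumes "0 < n" "0 < \<tau>"
  shows "ennreal (exp (-1) / (pi\<^sup>2 * \<tau>) * ln (1 + \<tau>\<^sup>2 / (\<bar>x\<bar> + 1)\<^sup>2)) \<le> hs_marginal n \<tau> x"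
proof -
  define d where "d = 1 / sqrt (real n)"
  define A where "A = exp (-1/2) / (pi * sqrt (2 * pi) * \<tau>) * ln (1 + \<tau>\<^sup>2 / (\<bar>x\<bar> + 1)\<^sup>2)"
  define B where "B = exp (-1/2) / (sqrt (2 * pi) * d)"
  have d: "0 < d" "d \<le> 1"
    using assms by (auto simp: d_def)
  have AB: "0 \<le> A" "0 \<le> B"
    using assms d by (simp_all add: A_def B_def add_pos_nonneg)
  have "exp (-1) / (pi\<^sup>2 * \<tau>) * ln (1 + \<tau>\<^sup>2 / (\<bar>x\<bar> + 1)\<^sup>2) = A * B * (2 * d)"
  proof -
    have "exp (-1::real) = exp (-1/2) * exp (-1/2)"
      by (simp add: mult_exp_exp)
    then show ?thesis
      using d assms by (simp add: A_def B_def field_simps power2_eq_square)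
  qed
  then have "ennreal (exp (-1) / (pi\<^sup>2 * \<tau>) * ln (1 + \<tau>\<^sup>2 / (\<bar>x\<bar> + 1)\<^sup>2))
      = (\<integral>\<^sup>+th. ennreal (A * B) * indicator {x - d..x + d} th \<partial>lborel)"
    using d AB by (simp add: nn_integral_cmult_indicator ennreal_mult[symmetric])
  also have "\<dots> \<le> hs_marginal n \<tau> x"
    unfolding hs_marginal_def
  proof (intro nn_integral_mono)
    fix th :: real
    show "ennreal (A * B) * indicator {x - d..x + d} th \<le> hs_density \<tau> th * ennreal (lik n th x)"
    proof (cases "th \<in> {x - d..x + d}")
      case True
      then have "\<bar>th\<bar> \<le> \<bar>x\<bar> + 1" "\<bar>x - th\<bar> \<le> d"
        using d by auto
      have "ennreal A \<le> hs_density \<tau> th"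
        unfolding A_def using assms \<open>\<bar>th\<bar> \<le> \<bar>x\<bar> + 1\<close> by (intro hs_density_ge) auto
      moreover have "B \<le> lik n th x"
        unfolding B_def d_def lik_def using d \<open>\<bar>x - th\<bar> \<le> d\<close> by (intro normal_density_ge) (auto simp: d_def)
      ultimately show ?thesis
        using True AB by (simp add: ennreal_mult mult_mono)
    qed simp
  qed
  finally show ?thesis .
qed

lemma lik_le_mult_hs_marginal:
  assumes "0 < n" "0 < \<tau>"
  shows "ennreal (lik n \<theta>\<^sub>0 x)
    \<le> ennreal (16 * exp 1 * pi\<^sup>2 / sqrt (2 * pi) * (\<tau> * sqrt (real n)) / ln (1 + 4 * \<tau>\<^sup>2 / (\<bar>\<theta>\<^sub>0\<bar> + 1)\<^sup>2))
      * hs_marginal n \<tau> x"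
proof -
  define L0 where "L0 = ln (1 + 4 * \<tau>\<^sup>2 / (\<bar>\<theta>\<^sub>0\<bar> + 1)\<^sup>2)"
  define Lx where "Lx = ln (1 + \<tau>\<^sup>2 / (\<bar>x\<bar> + 1)\<^sup>2)"
  define K where "K = 16 * exp 1 * pi\<^sup>2 / sqrt (2 * pi) * (\<tau> * sqrt (real n)) / L0"
  have L0: "0 < L0" and Lx: "0 \<le> Lx" and K: "0 \<le> K"
    using assms by (simp_all add: L0_def Lx_def K_def add_pos_nonneg)
  have "exp (- real n * (x - \<theta>\<^sub>0)\<^sup>2 / 2) \<le> exp (- (x - \<theta>\<^sub>0)\<^sup>2 / 2)"
    using assms mult_right_mono[of 1 "real n" "(x - \<theta>\<^sub>0)\<^sup>2"] by simp
  also have "\<dots> \<le> 16 * Lx / L0"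
    using ln_one_plus_div_sq_shift_le[of "\<tau>\<^sup>2" \<theta>\<^sub>0 x] L0
    by (simp add: L0_def Lx_def field_simps)
  finally have "lik n \<theta>\<^sub>0 x \<le> sqrt (real n) / sqrt (2 * pi) * (16 * Lx / L0)"
    unfolding lik_eq[OF assms(1)] by (rule mult_left_mono) simp
  also have "\<dots> = K * (exp (-1) / (pi\<^sup>2 * \<tau>) * Lx)"
    using assms L0 by (simp add: K_def exp_minus field_simps)
  finally have "ennreal (lik n \<theta>\<^sub>0 x) \<le> ennreal K * ennreal (exp (-1) / (pi\<^sup>2 * \<tau>) * Lx)"
    using K by (simp add: ennreal_leI ennreal_mult'[symmetric])
  also have "\<dots> \<le> ennreal K * hs_marginal n \<tau> x"
    unfolding Lx_def using assms by (intro mult_left_mono hs_marginal_ge) simp_all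
  finally show ?thesis
    by (simp add: K_def L0_def)
qed

lemma ennreal_mult_divide_le:
  fixes a k M N :: ennreal
  assumes "a \<le> k * M"
  shows "a * (N / M) \<le> k * N"
proof (cases "M = 0 \<or> M = top")
  case False
  have "a * (N / M) \<le> k * M * (N / M)"
    using assms by (rule mult_right_mono) simp
  also have "\<dots> = k * (N * M / M)"
    by (simp add: ennreal_times_divide mult_ac)
  also have "\<dots> = k * N"
    using False by (simp add: ennreal_mult_divide_eq)
  finally show ?thesis .
qed (use assms in auto)

lemma nn_integral_lik_mult_post_expect_exp_le:
  assumes "0 < n" "0 < \<tau>"
  shows "(\<integral>\<^sup>+ x. ennreal (lik n \<theta>\<^sub>0 x) * post_expect n \<tau> (\<lambda>th. exp (t * sqrt (real n) * (th - x))) x \<partial>lborel)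
    \<le> ennreal (16 * exp 1 * pi\<^sup>2 / sqrt (2 * pi) * (\<tau> * sqrt (real n)) / ln (1 + 4 * \<tau>\<^sup>2 / (\<bar>\<theta>\<^sub>0\<bar> + 1)\<^sup>2)
      * exp (t\<^sup>2 / 2))"
proof -
  define K where "K = 16 * exp 1 * pi\<^sup>2 / sqrt (2 * pi) * (\<tau> * sqrt (real n)) / ln (1 + 4 * \<tau>\<^sup>2 / (\<bar>\<theta>\<^sub>0\<bar> + 1)\<^sup>2)"
  define N where "N x = (\<integral>\<^sup>+th. ennreal (exp (t * sqrt (real n) * (th - x)))
    * hs_density \<tau> th * ennreal (lik n th x) \<partial>lborel)" for x
  have [measurable]: "N \<in> borel_measurable borel"
    unfolding N_def by measurable
  have K: "0 \<le> K"
    using assms by (simp add: K_def add_pos_nonneg)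
  have "ennreal (lik n \<theta>\<^sub>0 x) * post_expect n \<tau> (\<lambda>th. exp (t * sqrt (real n) * (th - x))) x
      \<le> ennreal K * N x" for x
    unfolding post_expect_def hs_marginal_def[symmetric] N_def K_def
    using assms by (intro ennreal_mult_divide_le lik_le_mult_hs_marginal)
  then have "(\<integral>\<^sup>+ x. ennreal (lik n \<theta>\<^sub>0 x)
        * post_expect n \<tau> (\<lambda>th. exp (t * sqrt (real n) * (th - x))) x \<partial>lborel)
      \<le> ennreal K * (\<integral>\<^sup>+x. N x \<partial>lborel)"
    by (subst nn_integral_cmult[symmetric]) (auto intro: nn_integral_mono)
  also have "\<dots> \<le> ennreal K * ennreal (exp (t\<^sup>2 / 2))"
    unfolding N_def using assms by (intro mult_left_mono nn_integral_joint_exp_shift_le) simp_all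
  also have "\<dots> = ennreal (K * exp (t\<^sup>2 / 2))"
    using K by (simp add: ennreal_mult')
  finally show ?thesis
    unfolding K_def .
qed

theorem mainTheorem9:
  shows "\<exists>C::real. C > 0 \<and>
    (\<forall>(n::nat) (t::real) (\<theta>\<^sub>0::real) (\<tau>::real). n \<ge> 1 \<longrightarrow> \<tau> > 0 \<longrightarrow>
      (\<integral>\<^sup>+ x. ennreal (lik n \<theta>\<^sub>0 x) *
          post_expect n \<tau> (\<lambda>th. exp (t * sqrt (real n) * (th - x))) x \<partial>lborel)
      \<le> ennreal (C * (\<tau> * sqrt (real n)) / ln (1 + 4 * \<tau>\<^sup>2 / (\<bar>\<theta>\<^sub>0\<bar> + 1)\<^sup>2) * exp (t\<^sup>2 / 2)))"
  by (intro exI[of _ "16 * exp 1 * pi\<^sup>2 / sqrt (2 * pi)"] conjI allI impI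
      nn_integral_lik_mult_post_expect_exp_le) simp_all

end
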